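(* Let $q=(V_q,E_q,L_q)$ and $H=(V_H,E_H,L_H)$ be hypergraphs, let $E'\subseteq E_q$ be non-empty with partial query $q'=(\bigcup_{e\in E'}e,E',L_q)$, and let $M:E'\to E_H$ be any map. Then $M$ is a partial embedding of $q'$ in $H$ if and only if for every non-empty subset $S\subseteq E'$ we have $Sig(\mathrm{Cell}_q(S))=Sig(\mathrm{Cell}_H^M(S))$.
   Context: A (vertex-labeled) hypergraph is a triple $H=(V,E,L)$ where $V$ is a finite set, $E$ is a set of non-empty subsets of $V$ (hyperedges, no repeated hyperedges) with $\bigcup_{e\in E}e=V$, and $L:V\to\Sigma$ assigns each vertex a label. For $S\subseteq V$, $Sig(S)$ is the multiset of labels $\{L(v)\mid v\in S\}$. For $E'\subseteq E_q$, the partial query is $q'=(\bigcup_{e\in E'}e,E',L_q)$; a map $M:E'\to E_H$ is a partial embedding if there exists an injective label-preserving $\phi:\bigcup_{e\in E'}e\to V_H$ with $\{\phi(u):u\in e\}=M(e)$ for all $e\in E'$. Cells: for non-empty $S\subseteq E'$, $\mathrm{Cell}_q(S)=\{u\in\bigcup_{e\in E'}e : \{e\in E': u\in e\}=S\}$ (vertices lying in all hyperedges of $S$ and in no hyperedge of $E'\setminus S$), and $\mathrm{Cell}^M_H(S)=\{v\in\bigcup_{e\in E'}M(e) : \{e\in E': v\in M(e)\}=S\}$ (the corresponding cell of the image hyperedges $M(S)$). *)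

theory Defs
  imports Main "HOL-Library.Multiset"
begin

definition hypergraph :: "'v set \<Rightarrow> 'v set set \<Rightarrow> ('v \<Rightarrow> 'l) \<Rightarrow> bool" where
  "hypergraph V E L \<longleftrightarrow> finite V \<and> (\<forall>e\<in>E. e \<noteq> {} \<and> e \<subseteq> V) \<and> \<Union>E = V"

definition Sig :: "('v \<Rightarrow> 'l) \<Rightarrow> 'v set \<Rightarrow> 'l multiset" where
  "Sig L S = image_mset L (mset_set S)"

text \<open>M : E' \<rightarrow> E_H is a partial embedding of q' = (\<Union>E', E', L_q) in H.\<close>
definition partial_embedding ::
  "'a set set \<Rightarrow> ('a \<Rightarrow> 'l) \<Rightarrow> 'b set set \<Rightarrow> ('b \<Rightarrow> 'l) \<Rightarrow> ('a set \<Rightarrow> 'b set) \<Rightarrow> bool" where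
  "partial_embedding E' Lq EH LH M \<longleftrightarrow>
     (\<forall>e\<in>E'. M e \<in> EH) \<and>
     (\<exists>\<phi>. inj_on \<phi> (\<Union>E') \<and> (\<forall>u\<in>\<Union>E'. LH (\<phi> u) = Lq u) \<and> (\<forall>e\<in>E'. \<phi> ` e = M e))"

definition cell_q :: "'a set set \<Rightarrow> 'a set set \<Rightarrow> 'a set" where
  "cell_q E' S = {u \<in> \<Union>E'. {e \<in> E'. u \<in> e} = S}"

definition cell_H :: "'a set set \<Rightarrow> ('a set \<Rightarrow> 'b set) \<Rightarrow> 'a set set \<Rightarrow> 'b set" where
  "cell_H E' M S = {v \<in> \<Union>(M ` E'). {e \<in> E'. v \<in> M e} = S}"

end

(*
  A partial embedding is the same thing as a label-preserving bijection \<phi> from the vertices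
  of q' onto those of M(E') such that, for every vertex u and every e \<in> E', \<phi> u lies in M e
  exactly when u lies in e: injectivity together with \<phi> ` e = M e says precisely this.
  Such a bijection, preserving the key u \<mapsto> ({e \<in> E'. u \<in> e}, label of u), exists iff every
  key has equally many preimages on both sides. The vertices with key (S, l) are the vertices
  of label l in Cell(S), so these counts are the multiplicities of l in Sig(Cell(S)).
*)
theory Submission
  imports Defs "HOL-Library.Disjoint_Sets"
begin

lemma count_Sig:
  assumes "finite A"
  shows "count (Sig L A) l = card {a \<in> A. L a = l}"
  using assms unfolding Sig_def
  by (simp add: count_conv_size_mset filter_mset_image_mset)

lemma bij_betw_glue_fibers:
  assumes "\<And>k. bij_betw (g k) {a \<in> A. p a = k} {b \<in> B. q b = k}"
  shows "bij_betw (\<lambda>a. g (p a) a) A B"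
proof -
  have "bij_betw (\<lambda>a. g (p a) a) (\<Union>k. {a \<in> A. p a = k}) (\<Union>k. {b \<in> B. q b = k})"
  proof (rule bij_betw_UNION_disjoint)
    show "disjoint_family (\<lambda>k. {b \<in> B. q b = k})"
      by (auto simp: disjoint_family_on_def)
    show "bij_betw (\<lambda>a. g (p a) a) {a \<in> A. p a = k} {b \<in> B. q b = k}" for k
      using assms[of k] by (rule bij_betw_cong[THEN iffD2, rotated]) simp
  qed
  moreover have "(\<Union>k. {a \<in> A. p a = k}) = A" "(\<Union>k. {b \<in> B. q b = k}) = B"
    by auto
  ultimately show ?thesis by simp
qed

lemma bij_betw_fiber:
  assumes "bij_betw f A B" and "\<forall>a\<in>A. q (f a) = p a"
  shows "bij_betw f {a \<in> A. p a = k} {b \<in> B. q b = k}"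
proof -
  have "f ` {a \<in> A. p a = k} = {b \<in> B. q b = k}"
  proof
    show "f ` {a \<in> A. p a = k} \<subseteq> {b \<in> B. q b = k}"
      using assms by (auto dest: bij_betwE)
    show "{b \<in> B. q b = k} \<subseteq> f ` {a \<in> A. p a = k}"
      using assms by (auto simp: bij_betw_def)
  qed
  moreover have "inj_on f {a \<in> A. p a = k}"
    using assms by (auto simp: bij_betw_def intro: inj_on_subset)
  ultimately show ?thesis by (simp add: bij_betw_def)
qed

lemma ex_fiber_preserving_bij_iff_card_fibers:
  assumes "finite A" and "finite B"
  shows "(\<exists>f. bij_betw f A B \<and> (\<forall>a\<in>A. q (f a) = p a)) \<longleftrightarrow>
         (\<forall>k. card {a \<in> A. p a = k} = card {b \<in> B. q b = k})"
proof
  assume "\<exists>f. bij_betw f A B \<and> (\<forall>a\<in>A. q (f a) = p a)"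
  then obtain f where "bij_betw f A B" and "\<forall>a\<in>A. q (f a) = p a"
    by blast
  then show "\<forall>k. card {a \<in> A. p a = k} = card {b \<in> B. q b = k}"
    by (blast intro: bij_betw_same_card bij_betw_fiber)
next
  assume "\<forall>k. card {a \<in> A. p a = k} = card {b \<in> B. q b = k}"
  then have "\<forall>k. \<exists>g. bij_betw g {a \<in> A. p a = k} {b \<in> B. q b = k}"
    using assms by (simp add: bij_betw_iff_card)
  then obtain g where g: "\<And>k. bij_betw (g k) {a \<in> A. p a = k} {b \<in> B. q b = k}"
    by metis
  have "q (g (p a) a) = p a" if "a \<in> A" for a
    using g[of "p a"] that by (auto dest: bij_betwE)
  with bij_betw_glue_fibers[OF g] show "\<exists>f. bij_betw f A B \<and> (\<forall>a\<in>A. q (f a) = p a)"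
    by blast
qed

lemma count_Sig_fiber:
  assumes "finite A"
  shows "count (Sig L {a \<in> A. p a = k}) l = card {a \<in> A. (p a, L a) = (k, l)}"
  using assms by (simp add: count_Sig conj_assoc)

lemma Sig_fibers_eq_iff_card_fibers:
  assumes "finite A" and "finite B"
  shows "(\<forall>k. Sig L {a \<in> A. p a = k} = Sig L' {b \<in> B. q b = k}) \<longleftrightarrow>
         (\<forall>kl. card {a \<in> A. (p a, L a) = kl} = card {b \<in> B. (q b, L' b) = kl})"
  using assms by (simp add: multiset_eq_iff count_Sig_fiber)

lemma bij_betw_edges_iff:
  "inj_on \<phi> (\<Union>E) \<and> (\<forall>e\<in>E. \<phi> ` e = M e) \<longleftrightarrow>
   bij_betw \<phi> (\<Union>E) (\<Union>(M ` E)) \<and> (\<forall>u\<in>\<Union>E. {e \<in> E. \<phi> u \<in> M e} = {e \<in> E. u \<in> e})"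
proof
  assume "inj_on \<phi> (\<Union>E) \<and> (\<forall>e\<in>E. \<phi> ` e = M e)"
  then have inj: "inj_on \<phi> (\<Union>E)" and im: "\<forall>e\<in>E. \<phi> ` e = M e" by auto
  have "\<phi> ` \<Union>E = \<Union>(M ` E)"
    using im by (auto simp: image_Union)
  moreover have "\<phi> u \<in> M e \<longleftrightarrow> u \<in> e" if "u \<in> \<Union>E" "e \<in> E" for u e
    using im inj that by (metis Union_upper inj_on_image_mem_iff)
  ultimately show "bij_betw \<phi> (\<Union>E) (\<Union>(M ` E)) \<and> (\<forall>u\<in>\<Union>E. {e \<in> E. \<phi> u \<in> M e} = {e \<in> E. u \<in> e})"
    using inj by (auto simp: bij_betw_def)
next
  assume "bij_betw \<phi> (\<Union>E) (\<Union>(M ` E)) \<and> (\<forall>u\<in>\<Union>E. {e \<in> E. \<phi> u \<in> M e} = {e \<in> E. u \<in> e})"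
  then have bij: "bij_betw \<phi> (\<Union>E) (\<Union>(M ` E))"
    and mem: "\<And>u e. u \<in> \<Union>E \<Longrightarrow> e \<in> E \<Longrightarrow> \<phi> u \<in> M e \<longleftrightarrow> u \<in> e"
    by blast+
  have "\<phi> ` e = M e" if "e \<in> E" for e
  proof
    show "\<phi> ` e \<subseteq> M e" using mem that by blast
    show "M e \<subseteq> \<phi> ` e"
    proof
      fix v assume "v \<in> M e"
      then have "v \<in> \<phi> ` \<Union>E"
        using bij that by (auto simp: bij_betw_def)
      then obtain u where "u \<in> \<Union>E" "v = \<phi> u"
        by blast
      with mem \<open>v \<in> M e\<close> that show "v \<in> \<phi> ` e" by blast
    qed
  qed
  with bij show "inj_on \<phi> (\<Union>E) \<and> (\<forall>e\<in>E. \<phi> ` e = M e)"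
    by (simp add: bij_betw_def)
qed

lemma partial_embedding_iff_bij_betw:
  assumes "\<forall>e\<in>E'. M e \<in> EH"
  shows "partial_embedding E' Lq EH LH M \<longleftrightarrow>
     (\<exists>\<phi>. bij_betw \<phi> (\<Union>E') (\<Union>(M ` E')) \<and>
       (\<forall>u\<in>\<Union>E'. ({e \<in> E'. \<phi> u \<in> M e}, LH (\<phi> u)) = ({e \<in> E'. u \<in> e}, Lq u)))"
proof -
  have "partial_embedding E' Lq EH LH M \<longleftrightarrow>
    (\<exists>\<phi>. (inj_on \<phi> (\<Union>E') \<and> (\<forall>e\<in>E'. \<phi> ` e = M e)) \<and> (\<forall>u\<in>\<Union>E'. LH (\<phi> u) = Lq u))"
    using assms unfolding partial_embedding_def by blast
  also have "\<dots> \<longleftrightarrow> (\<exists>\<phi>. (bij_betw \<phi> (\<Union>E') (\<Union>(M ` E')) \<and>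
      (\<forall>u\<in>\<Union>E'. {e \<in> E'. \<phi> u \<in> M e} = {e \<in> E'. u \<in> e})) \<and> (\<forall>u\<in>\<Union>E'. LH (\<phi> u) = Lq u))"
    by (simp only: bij_betw_edges_iff)
  finally show ?thesis
    by (simp only: prod.inject ball_conj_distrib conj_assoc)
qed

lemma cell_q_eq_empty: "\<not> (S \<subseteq> E' \<and> S \<noteq> {}) \<Longrightarrow> cell_q E' S = {}"
  unfolding cell_q_def by auto

lemma cell_H_eq_empty: "\<not> (S \<subseteq> E' \<and> S \<noteq> {}) \<Longrightarrow> cell_H E' M S = {}"
  unfolding cell_H_def by auto

theorem theorem3:
  fixes Vq :: "'a set" and Eq :: "'a set set" and Lq :: "'a \<Rightarrow> 'l"
    and VH :: "'b set" and EH :: "'b set set" and LH :: "'b \<Rightarrow> 'l"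
    and E' :: "'a set set" and M :: "'a set \<Rightarrow> 'b set"
  assumes "hypergraph Vq Eq Lq" and "hypergraph VH EH LH"
    and "E' \<subseteq> Eq" and "E' \<noteq> {}"
    and "\<forall>e\<in>E'. M e \<in> EH"
  shows "partial_embedding E' Lq EH LH M \<longleftrightarrow>
         (\<forall>S. S \<subseteq> E' \<and> S \<noteq> {} \<longrightarrow> Sig Lq (cell_q E' S) = Sig LH (cell_H E' M S))"
proof -
  have "\<Union>E' \<subseteq> Vq" "\<Union>(M ` E') \<subseteq> VH" "finite Vq" "finite VH"
    using assms(1,2,3,5) unfolding hypergraph_def by auto
  then have fin: "finite (\<Union>E')" "finite (\<Union>(M ` E'))"
    by (metis finite_subset)+
  have "partial_embedding E' Lq EH LH M \<longleftrightarrow>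
    (\<exists>\<phi>. bij_betw \<phi> (\<Union>E') (\<Union>(M ` E')) \<and>
       (\<forall>u\<in>\<Union>E'. ({e \<in> E'. \<phi> u \<in> M e}, LH (\<phi> u)) = ({e \<in> E'. u \<in> e}, Lq u)))"
    by (rule partial_embedding_iff_bij_betw[OF assms(5)])
  also have "\<dots> \<longleftrightarrow> (\<forall>kl. card {u \<in> \<Union>E'. ({e \<in> E'. u \<in> e}, Lq u) = kl} =
                        card {v \<in> \<Union>(M ` E'). ({e \<in> E'. v \<in> M e}, LH v) = kl})"
    by (rule ex_fiber_preserving_bij_iff_card_fibers[OF fin,
        of "\<lambda>v. ({e \<in> E'. v \<in> M e}, LH v)" "\<lambda>u. ({e \<in> E'. u \<in> e}, Lq u)"])
  also have "\<dots> \<longleftrightarrow> (\<forall>S. Sig Lq (cell_q E' S) = Sig LH (cell_H E' M S))"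
    unfolding cell_q_def cell_H_def by (rule Sig_fibers_eq_iff_card_fibers[OF fin, symmetric])
  also have "\<dots> \<longleftrightarrow> (\<forall>S. S \<subseteq> E' \<and> S \<noteq> {} \<longrightarrow> Sig Lq (cell_q E' S) = Sig LH (cell_H E' M S))"
  proof -
    have "Sig Lq (cell_q E' S) = Sig LH (cell_H E' M S)" if "\<not> (S \<subseteq> E' \<and> S \<noteq> {})" for S
      using that by (simp add: cell_q_eq_empty cell_H_eq_empty Sig_def)
    then show ?thesis by blast
  qed
  finally show ?thesis .
qed

end
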